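(* Fix $\alpha>0$. For each $N\ge 2$, let $T_1,\ldots,T_N$ be drawn independently and uniformly at random (i.e. with replacement) from $\{n\in\mathbb{N}: n\le e^{\alpha N}\}$, and let $\Gamma_{j,k}=\gcd(T_j,T_k)$. Then for every $\eta>0$, \[ \lim_{N\to\infty}\mathbb{P}\Big[N^{2-\eta}<\max_{1\le j<k\le N}\Gamma_{j,k}<N^{2+\eta}\Big]=1 . \] *)

theory Defs
  imports "HOL-Probability.Probability"
begin

definition sample_set :: "real \<Rightarrow> nat \<Rightarrow> nat set" where
  "sample_set \<alpha> N = {n::nat. 1 \<le> n \<and> real n \<le> exp (\<alpha> * real N)}"

text \<open>Joint law of T_0,...,T_{N-1}: i.i.d. uniform on sample_set (indices shifted to start at 0).\<close>
definition T_law :: "real \<Rightarrow> nat \<Rightarrow> (nat \<Rightarrow> nat) pmf" where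
  "T_law \<alpha> N = Pi_pmf {..<N} 0 (\<lambda>_. pmf_of_set (sample_set \<alpha> N))"

definition max_gcd :: "nat \<Rightarrow> (nat \<Rightarrow> nat) \<Rightarrow> nat" where
  "max_gcd N T = Max {gcd (T j) (T k) | j k. j < k \<and> k < N}"

end

theory Submission
  imports Defs
begin

(*
  Write n = floor(exp(alpha N)), so that T_0, ..., T_{N-1} are independent and uniform on
  {1..n}.  For a set D of moduli let X_D(T) count the pairs (j < k, d in D) with d dividing both
  T_j and T_k; the largest pairwise gcd is at least min D as soon as X_D(T) > 0, and it is at
  least m if and only if X_{[m,n]}(T) > 0 (all entries lie in {1..n}).

  Upper tail: by Markov's inequality, P(max gcd >= m) <= E X_{[m,n]}
  <= N^2 * sum_{d >= m} 1/d^2 <= 2 N^2 / m.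
  Lower tail: for the dyadic block D = (a, 2a] the mean E X_D is of order N^2/a, and the
  second-moment method bounds P(X_D = 0) by Var X_D / (E X_D)^2.  The variance only receives
  contributions from equal pairs (of order N^2/a) and from pairs sharing one index (of order
  N^3 sqrt a / a^2), by gcd-sum estimates over the block.  Hence P(max gcd <= a) is
  O(a/N^2 + sqrt a / N).
*)

definition freq :: "nat \<Rightarrow> (nat \<Rightarrow> bool) \<Rightarrow> real" where
  "freq n Q = real (card {t\<in>{1..n}. Q t}) / real n"

lemma freq_nonneg: "freq n Q \<ge> 0"
  by (simp add: freq_def)

lemma freq_le_1: "freq n Q \<le> 1"
proof (cases "n = 0")
  case False
  have "card {t\<in>{1..n}. Q t} \<le> card {1..n}"
    by (rule card_mono) auto
  with False show ?thesis
    by (simp add: freq_def)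
qed (simp add: freq_def)

lemma freq_mono:
  assumes "\<And>t. Q t \<Longrightarrow> R t"
  shows "freq n Q \<le> freq n R"
proof -
  have "card {t\<in>{1..n}. Q t} \<le> card {t\<in>{1..n}. R t}"
    by (rule card_mono) (use assms in auto)
  then show ?thesis
    unfolding freq_def by (intro divide_right_mono) auto
qed

lemma freq_True:
  assumes "n \<ge> 1"
  shows "freq n (\<lambda>_. True) = 1"
proof -
  have "{t\<in>{1..n}. True} = {1..n}"
    by auto
  with assms show ?thesis
    unfolding freq_def by simp
qed

text \<open>The multiples of \<open>m\<close> in \<open>{1..n}\<close> are exactly \<open>m, 2m, \<dots>, (n div m) m\<close>.\<close>
lemma card_multiples:
  assumes "m > 0"
  shows "card {t\<in>{1..n}. m dvd t} = n div m"
proof -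
  have "{t\<in>{1..n}. m dvd t} = (\<lambda>i. m * i) ` {1..n div m}"
  proof safe
    fix t assume t: "t \<in> {1..n}" "m dvd t"
    then obtain i where i: "t = m * i"
      by auto
    with t assms have "1 \<le> i" "i \<le> n div m"
      by (auto simp: less_eq_div_iff_mult_less_eq mult.commute intro: Suc_leI)
    with i show "t \<in> (\<lambda>i. m * i) ` {1..n div m}"
      by auto
  qed (use assms in \<open>auto simp: less_eq_div_iff_mult_less_eq mult.commute\<close>)
  also have "card \<dots> = n div m"
    using assms by (subst card_image) (auto simp: inj_on_def)
  finally show ?thesis .
qed

lemma freq_dvd_le:
  assumes "m > 0"
  shows "freq n (\<lambda>t. m dvd t) \<le> 1 / real m"
proof -
  have "real (n div m) * real m \<le> real n"
    by (metis of_nat_le_iff of_nat_mult div_times_less_eq_dividend)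
  with assms show ?thesis
    unfolding freq_def card_multiples[OF assms] by (cases "n = 0") (simp_all add: field_simps)
qed

lemma freq_dvd_ge:
  assumes "m > 0" "2 * m \<le> n"
  shows "freq n (\<lambda>t. m dvd t) \<ge> 1 / (2 * real m)"
proof -
  have "n = n div m * m + n mod m"
    by simp
  also have "\<dots> < (n div m + 1) * m"
    using mod_less_divisor[OF assms(1), of n] by (simp only: add_mult_distrib mult_1 add_less_cancel_left)
  finally have "n < (n div m + 1) * m" .
  then have "real n < (real (n div m) + 1) * real m"
    by (metis of_nat_1 of_nat_add of_nat_less_iff of_nat_mult)
  moreover have "2 * real m \<le> real n"
    using assms(2) by simp
  ultimately have "real n \<le> 2 * real (n div m) * real m"
    by (simp add: algebra_simps)
  with assms show ?thesis
    unfolding freq_def card_multiples[OF assms(1)] by (simp add: field_simps)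
qed

lemma freq_le_inverse:
  assumes "m > 0" "\<And>t. Q t \<Longrightarrow> m dvd t"
  shows "freq n Q \<le> 1 / real m"
  using freq_mono[of Q "\<lambda>t. m dvd t" n, OF assms(2)] freq_dvd_le[OF assms(1), of n] by linarith

lemma prob_pmf_of_set_interval:
  assumes "n \<ge> 1"
  shows "measure_pmf.prob (pmf_of_set {1..n}) {t. Q t} = freq n Q"
proof -
  have "{1..n} \<inter> {t. Q t} = {t\<in>{1..n}. Q t}"
    by auto
  with assms show ?thesis
    by (simp add: measure_pmf_of_set freq_def)
qed


lemma prob_eq_expectation:
  "measure_pmf.prob M {x. P x} = measure_pmf.expectation M (\<lambda>x. of_bool (P x) :: real)"
proof -
  have "(\<lambda>x. of_bool (P x) :: real) = indicator {x. P x}"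
    by (auto simp: indicator_def)
  then show ?thesis
    by simp
qed

lemma integrable_of_bool: "integrable (measure_pmf M) (\<lambda>x. of_bool (P x) :: real)"
  by (rule measure_pmf.integrable_const_bound[where B = 1]) auto

lemma prob_mono_on_support:
  assumes "\<And>x. x \<in> set_pmf M \<Longrightarrow> P x \<Longrightarrow> Q x"
  shows "measure_pmf.prob M {x. P x} \<le> measure_pmf.prob M {x. Q x}"
  using assms by (intro measure_pmf.finite_measure_mono_AE) (auto intro!: AE_pmfI)

lemma prob_le_expectation:
  fixes M :: "'a pmf" and X :: "'a \<Rightarrow> real"
  assumes "integrable M X" "\<And>x. x \<in> set_pmf M \<Longrightarrow> X x \<ge> 0"
    and "\<And>x. x \<in> set_pmf M \<Longrightarrow> P x \<Longrightarrow> X x \<ge> 1"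
  shows "measure_pmf.prob M {x. P x} \<le> measure_pmf.expectation M X"
  unfolding prob_eq_expectation
proof (rule integral_mono_AE)
  show "AE x in M. of_bool (P x) \<le> X x"
    using assms(2,3) by (auto intro!: AE_pmfI)
qed (use assms(1) integrable_of_bool in auto)

text \<open>Second-moment method: \<open>P(X = 0) \<cdot> (E X)\<^sup>2 \<le> Var X\<close>, since
  \<open>[X = 0] \<cdot> (E X)\<^sup>2 \<le> (X - E X)\<^sup>2\<close> pointwise.\<close>
lemma second_moment_method:
  fixes M :: "'a pmf" and X :: "'a \<Rightarrow> real"
  assumes "integrable M X" "integrable M (\<lambda>x. X x * X x)"
  shows "measure_pmf.prob M {x. X x = 0} * (measure_pmf.expectation M X) ^ 2
     \<le> measure_pmf.expectation M (\<lambda>x. X x * X x) - (measure_pmf.expectation M X) ^ 2"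
proof -
  let ?E = "measure_pmf.expectation M" and ?\<mu> = "measure_pmf.expectation M X"
  have "?E (\<lambda>x. of_bool (X x = 0) * ?\<mu> ^ 2) \<le> ?E (\<lambda>x. X x * X x - 2 * ?\<mu> * X x + ?\<mu> ^ 2)"
  proof (rule integral_mono)
    fix x
    have "0 \<le> (X x - ?\<mu>) ^ 2"
      by simp
    then show "of_bool (X x = 0) * ?\<mu> ^ 2 \<le> X x * X x - 2 * ?\<mu> * X x + ?\<mu> ^ 2"
      by (cases "X x = 0") (simp_all add: power2_eq_square algebra_simps)
  qed (use assms integrable_of_bool[of M "\<lambda>x. X x = 0"] in auto)
  also have "\<dots> = ?E (\<lambda>x. X x * X x) - ?\<mu> ^ 2"
    using assms by (simp add: power2_eq_square)
  finally show ?thesis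
    by (simp add: prob_eq_expectation)
qed

definition unif_tuples :: "nat \<Rightarrow> nat \<Rightarrow> (nat \<Rightarrow> nat) pmf" where
  "unif_tuples n N = Pi_pmf {..<N} 0 (\<lambda>_. pmf_of_set {1..n})"

lemma T_law_eq_unif_tuples: "T_law \<alpha> N = unif_tuples (nat \<lfloor>exp (\<alpha> * real N)\<rfloor>) N"
proof -
  have "sample_set \<alpha> N = {1..nat \<lfloor>exp (\<alpha> * real N)\<rfloor>}"
    by (auto simp: sample_set_def le_nat_floor) linarith
  then show ?thesis
    by (simp add: T_law_def unif_tuples_def)
qed

lemma set_pmf_unif_tuples:
  "n \<ge> 1 \<Longrightarrow> set_pmf (unif_tuples n N) = PiE_dflt {..<N} 0 (\<lambda>_. {1..n})"
  unfolding unif_tuples_def by (subst set_Pi_pmf) auto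

lemma unif_tuples_range:
  "n \<ge> 1 \<Longrightarrow> T \<in> set_pmf (unif_tuples n N) \<Longrightarrow> x < N \<Longrightarrow> T x \<in> {1..n}"
  by (auto simp: set_pmf_unif_tuples PiE_dflt_def)

lemma integrable_unif_tuples:
  fixes f :: "(nat \<Rightarrow> nat) \<Rightarrow> real"
  shows "n \<ge> 1 \<Longrightarrow> integrable (measure_pmf (unif_tuples n N)) f"
  by (rule integrable_measure_pmf_finite) (auto simp: set_pmf_unif_tuples)

lemma prob_coordinatewise:
  assumes "n \<ge> 1"
  shows "measure_pmf.prob (unif_tuples n N) {T. \<forall>x<N. C x (T x)} = (\<Prod>x<N. freq n (C x))"
proof -
  have "{T. \<forall>x<N. C x (T x)} = Pi {..<N} (\<lambda>x. {t. C x t})"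
    by (auto simp: Pi_def)
  then have "measure_pmf.prob (unif_tuples n N) {T. \<forall>x<N. C x (T x)}
      = (\<Prod>x<N. measure_pmf.prob (pmf_of_set {1..n}) {t. C x t})"
    unfolding unif_tuples_def by (simp only: measure_Pi_pmf_Pi finite_lessThan)
  then show ?thesis
    by (simp only: prob_pmf_of_set_interval[OF assms])
qed

lemma prob_coordinatewise_le:
  assumes "n \<ge> 1" "G \<subseteq> {..<N}"
  shows "measure_pmf.prob (unif_tuples n N) {T. \<forall>x<N. C x (T x)} \<le> (\<Prod>x\<in>G. freq n (C x))"
proof -
  have "(\<Prod>x<N. freq n (C x)) = (\<Prod>x\<in>{..<N} - G. freq n (C x)) * (\<Prod>x\<in>G. freq n (C x))"
    by (rule prod.subset_diff) (use assms in auto)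
  also have "\<dots> \<le> 1 * (\<Prod>x\<in>G. freq n (C x))"
    by (intro mult_right_mono prod_le_1 prod_nonneg) (auto simp: freq_nonneg freq_le_1)
  finally show ?thesis
    using prob_coordinatewise[OF assms(1)] by simp
qed

definition pairs :: "nat \<Rightarrow> (nat \<times> nat) set" where
  "pairs N = {(j, k). j < k \<and> k < N}"

definition ends :: "nat \<times> nat \<Rightarrow> nat set" where
  "ends p = {fst p, snd p}"

definition adjacent :: "nat \<times> nat \<Rightarrow> nat \<times> nat \<Rightarrow> bool" where
  "adjacent p p' \<longleftrightarrow> p \<noteq> p' \<and> ends p \<inter> ends p' \<noteq> {}"

definition divides_both :: "nat \<Rightarrow> nat \<times> nat \<Rightarrow> (nat \<Rightarrow> nat) \<Rightarrow> bool" where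
  "divides_both d p T \<longleftrightarrow> (\<forall>x\<in>ends p. d dvd T x)"

lemma finite_pairs: "finite (pairs N)"
  by (rule finite_subset[of _ "{..<N} \<times> {..<N}"]) (auto simp: pairs_def)

lemma ends_subset: "p \<in> pairs N \<Longrightarrow> ends p \<subseteq> {..<N}"
  by (auto simp: pairs_def ends_def)

lemma ends_subset_imp_eq: "p \<in> pairs N \<Longrightarrow> p' \<in> pairs N \<Longrightarrow> ends p \<subseteq> ends p' \<Longrightarrow> p = p'"
  by (auto simp: pairs_def ends_def)

lemma prob_divides_both:
  assumes "n \<ge> 1" "p \<in> pairs N"
  shows "measure_pmf.prob (unif_tuples n N) {T. divides_both d p T} = freq n (\<lambda>t. d dvd t) ^ 2"
proof -
  obtain j k where p: "p = (j, k)" "j < k" "k < N"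
    using assms(2) by (auto simp: pairs_def)
  let ?C = "\<lambda>x t. x \<in> ends p \<longrightarrow> d dvd t"
  have "{T. divides_both d p T} = {T. \<forall>x<N. ?C x (T x)}"
    using ends_subset[OF assms(2)] by (auto simp: divides_both_def)
  then have "measure_pmf.prob (unif_tuples n N) {T. divides_both d p T} = (\<Prod>x<N. freq n (?C x))"
    using prob_coordinatewise[OF assms(1), of N ?C] by simp
  also have "\<dots> = (\<Prod>x\<in>{j, k}. freq n (?C x))"
    by (rule prod.mono_neutral_right) (use p assms(1) in \<open>auto simp: ends_def freq_True\<close>)
  also have "\<dots> = freq n (\<lambda>t. d dvd t) ^ 2"
    using p by (simp add: ends_def power2_eq_square)
  finally show ?thesis .
qed

definition joint_freq :: "nat \<Rightarrow> nat \<times> nat \<Rightarrow> nat \<Rightarrow> nat \<times> nat \<Rightarrow> nat \<Rightarrow> nat \<Rightarrow> real" where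
  "joint_freq n p d p' d' x = freq n (\<lambda>t. (x \<in> ends p \<longrightarrow> d dvd t) \<and> (x \<in> ends p' \<longrightarrow> d' dvd t))"

lemma prob_joint_le:
  assumes "n \<ge> 1" "p \<in> pairs N" "p' \<in> pairs N" "G \<subseteq> {..<N}"
  shows "measure_pmf.prob (unif_tuples n N) {T. divides_both d p T \<and> divides_both d' p' T}
     \<le> (\<Prod>x\<in>G. joint_freq n p d p' d' x)"
proof -
  have "{T. divides_both d p T \<and> divides_both d' p' T}
      = {T. \<forall>x<N. (x \<in> ends p \<longrightarrow> d dvd T x) \<and> (x \<in> ends p' \<longrightarrow> d' dvd T x)}"
    using ends_subset[OF assms(2)] ends_subset[OF assms(3)] by (auto simp: divides_both_def)
  then show ?thesis
    using prob_coordinatewise_le[OF assms(1,4)] by (simp add: joint_freq_def)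
qed

lemma joint_freq_nonneg: "joint_freq n p d p' d' x \<ge> 0"
  by (simp add: joint_freq_def freq_nonneg)

lemma joint_freq_le:
  assumes "d > 0" "d' > 0"
  shows joint_freq_le_lcm: "x \<in> ends p \<Longrightarrow> x \<in> ends p' \<Longrightarrow> joint_freq n p d p' d' x \<le> 1 / real (lcm d d')"
    and joint_freq_le_left: "x \<in> ends p \<Longrightarrow> joint_freq n p d p' d' x \<le> 1 / real d"
    and joint_freq_le_right: "x \<in> ends p' \<Longrightarrow> joint_freq n p d p' d' x \<le> 1 / real d'"
  using assms unfolding joint_freq_def by (auto intro!: freq_le_inverse simp: lcm_pos_nat)

lemma inverse_lcm:
  assumes "d > 0" "d' > 0"
  shows "1 / real (lcm d d') = real (gcd d d') / (real d * real d')"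
proof -
  have "real d * real d' = real (gcd d d') * real (lcm d d')"
    by (metis of_nat_mult prod_gcd_lcm_nat)
  moreover have "real (lcm d d') > 0" "real (gcd d d') > 0"
    using assms by (auto simp: lcm_pos_nat)
  ultimately show ?thesis
    by (simp add: field_simps)
qed

lemma prob_joint_disjoint:
  assumes n: "n \<ge> 1" and p: "p \<in> pairs N" and p': "p' \<in> pairs N"
    and disj: "ends p \<inter> ends p' = {}"
  shows "measure_pmf.prob (unif_tuples n N) {T. divides_both d p T \<and> divides_both d' p' T}
     \<le> freq n (\<lambda>t. d dvd t) ^ 2 * freq n (\<lambda>t. d' dvd t) ^ 2"
proof -
  obtain j k j' k' where jk: "p = (j, k)" "j < k" "k < N" and jk': "p' = (j', k')" "j' < k'" "k' < N"
    using p p' by (auto simp: pairs_def)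
  have "measure_pmf.prob (unif_tuples n N) {T. divides_both d p T \<and> divides_both d' p' T}
      \<le> (\<Prod>x\<in>{j, k, j', k'}. joint_freq n p d p' d' x)"
    using jk jk' by (intro prob_joint_le[OF n p p']) auto
  also have "\<dots> = freq n (\<lambda>t. d dvd t) ^ 2 * freq n (\<lambda>t. d' dvd t) ^ 2"
    using disj jk jk' by (simp add: joint_freq_def ends_def power2_eq_square)
  finally show ?thesis .
qed

text \<open>The same pair with two moduli: both entries must be divisible by \<open>lcm d d'\<close>.\<close>
lemma prob_joint_same:
  assumes n: "n \<ge> 1" and p: "p \<in> pairs N" and d: "d > 0" "d' > 0"
  shows "measure_pmf.prob (unif_tuples n N) {T. divides_both d p T \<and> divides_both d' p T}
     \<le> real (gcd d d') ^ 2 / (real d * real d') ^ 2"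
proof -
  obtain j k where jk: "p = (j, k)" "j < k" "k < N"
    using p by (auto simp: pairs_def)
  have "measure_pmf.prob (unif_tuples n N) {T. divides_both d p T \<and> divides_both d' p T}
      \<le> (\<Prod>x\<in>{j, k}. joint_freq n p d p d' x)"
    using jk by (intro prob_joint_le[OF n p p]) auto
  also have "\<dots> = joint_freq n p d p d' j * joint_freq n p d p d' k"
    using jk by simp
  also have "\<dots> \<le> (1 / real (lcm d d')) * (1 / real (lcm d d'))"
    using jk by (intro mult_mono joint_freq_le_lcm[OF d] joint_freq_nonneg) (auto simp: ends_def)
  also have "\<dots> = real (gcd d d') ^ 2 / (real d * real d') ^ 2"
    using inverse_lcm[OF d] by (simp add: power2_eq_square)
  finally show ?thesis .
qed

text \<open>Adjacent pairs span three coordinates: a shared one and one private to each pair.\<close>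
lemma prob_joint_adjacent:
  assumes n: "n \<ge> 1" and p: "p \<in> pairs N" and p': "p' \<in> pairs N" and d: "d > 0" "d' > 0"
    and adj: "adjacent p p'"
  shows "measure_pmf.prob (unif_tuples n N) {T. divides_both d p T \<and> divides_both d' p' T}
     \<le> real (gcd d d') / (real d * real d') ^ 2"
proof -
  let ?f = "joint_freq n p d p' d'"
  obtain x where x: "x \<in> ends p" "x \<in> ends p'"
    using adj by (auto simp: adjacent_def)
  obtain y where y: "y \<in> ends p" "y \<notin> ends p'"
    using adj ends_subset_imp_eq[OF p p'] by (auto simp: adjacent_def)
  obtain z where z: "z \<in> ends p'" "z \<notin> ends p"
    using adj ends_subset_imp_eq[OF p' p] by (auto simp: adjacent_def)
  have "x \<noteq> y" "x \<noteq> z" "y \<noteq> z"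
    using x y z by auto
  then have prod_xyz: "(\<Prod>w\<in>{x, y, z}. ?f w) = ?f x * (?f y * ?f z)"
    by simp
  have "measure_pmf.prob (unif_tuples n N) {T. divides_both d p T \<and> divides_both d' p' T}
      \<le> (\<Prod>w\<in>{x, y, z}. ?f w)"
    using x y z ends_subset[OF p] ends_subset[OF p'] by (intro prob_joint_le[OF n p p']) auto
  also have "\<dots> \<le> (1 / real (lcm d d')) * ((1 / real d) * (1 / real d'))"
    unfolding prod_xyz using x y z
    by (intro mult_mono joint_freq_le_lcm[OF d] joint_freq_le_left[OF d] joint_freq_le_right[OF d]
        joint_freq_nonneg mult_nonneg_nonneg) auto
  also have "\<dots> = real (gcd d d') / (real d * real d') ^ 2"
    using inverse_lcm[OF d] by (simp add: power2_eq_square)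
  finally show ?thesis .
qed

lemma prob_joint_bound:
  assumes n: "n \<ge> 1" and p: "p \<in> pairs N" and p': "p' \<in> pairs N" and d: "d > 0" "d' > 0"
  shows "measure_pmf.prob (unif_tuples n N) {T. divides_both d p T \<and> divides_both d' p' T}
     \<le> freq n (\<lambda>t. d dvd t) ^ 2 * freq n (\<lambda>t. d' dvd t) ^ 2
       + of_bool (p = p') * (real (gcd d d') ^ 2 / (real d * real d') ^ 2)
       + of_bool (adjacent p p') * (real (gcd d d') / (real d * real d') ^ 2)"
    (is "?P \<le> ?indep + ?same + ?adj")
proof -
  have nonneg: "?indep \<ge> 0" "?same \<ge> 0" "?adj \<ge> 0"
    by (simp_all add: freq_nonneg)
  consider "ends p \<inter> ends p' = {}" | "p = p'" | "adjacent p p'"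
    by (auto simp: adjacent_def)
  then show ?thesis
  proof cases
    case 1
    then show ?thesis
      using prob_joint_disjoint[OF n p p' 1, of d d'] nonneg by linarith
  next
    case 2
    then have "?P \<le> ?same" "?adj = 0"
      using prob_joint_same[OF n p d] by (simp_all add: adjacent_def)
    then show ?thesis
      using nonneg by linarith
  next
    case 3
    then have "?P \<le> ?adj" "?same = 0"
      using prob_joint_adjacent[OF n p p' d 3] by (simp_all add: adjacent_def)
    then show ?thesis
      using nonneg by linarith
  qed
qed

definition pair_count :: "nat \<Rightarrow> nat set \<Rightarrow> (nat \<Rightarrow> nat) \<Rightarrow> real" where
  "pair_count N D T = (\<Sum>p\<in>pairs N. \<Sum>d\<in>D. of_bool (divides_both d p T))"

lemma pair_count_nonneg: "pair_count N D T \<ge> 0"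
  by (simp add: pair_count_def sum_nonneg)

lemma pair_count_ge_1:
  assumes "finite D" "p \<in> pairs N" "d \<in> D" "divides_both d p T"
  shows "pair_count N D T \<ge> 1"
proof -
  have "1 \<le> (\<Sum>d'\<in>D. of_bool (divides_both d' p T) :: real)"
    using member_le_sum[OF assms(3), of "\<lambda>d'. of_bool (divides_both d' p T) :: real"] assms(1,4) by simp
  also have "\<dots> \<le> pair_count N D T"
    unfolding pair_count_def using assms(2) by (intro member_le_sum sum_nonneg) (auto simp: finite_pairs)
  finally show ?thesis .
qed

lemma expectation_pair_count:
  assumes "n \<ge> 1"
  shows "measure_pmf.expectation (unif_tuples n N) (pair_count N D)
     = real (card (pairs N)) * (\<Sum>d\<in>D. freq n (\<lambda>t. d dvd t) ^ 2)"
proof -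
  have "measure_pmf.expectation (unif_tuples n N) (pair_count N D)
      = (\<Sum>p\<in>pairs N. \<Sum>d\<in>D. measure_pmf.prob (unif_tuples n N) {T. divides_both d p T})"
    unfolding pair_count_def prob_eq_expectation
    by (simp add: Bochner_Integration.integral_sum integrable_unif_tuples[OF assms])
  also have "\<dots> = (\<Sum>p\<in>pairs N. \<Sum>d\<in>D. freq n (\<lambda>t. d dvd t) ^ 2)"
    by (intro sum.cong refl prob_divides_both[OF assms])
  finally show ?thesis
    by simp
qed

lemma sum_sum_separate:
  fixes F :: "'a \<Rightarrow> 'a \<Rightarrow> 'c::comm_semiring_0" and H :: "'b \<Rightarrow> 'b \<Rightarrow> 'c"
  shows "(\<Sum>p\<in>A. \<Sum>p'\<in>A. \<Sum>d\<in>D. \<Sum>d'\<in>D. F p p' * H d d')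
     = (\<Sum>p\<in>A. \<Sum>p'\<in>A. F p p') * (\<Sum>d\<in>D. \<Sum>d'\<in>D. H d d')"
  by (simp only: sum_distrib_right) (simp only: sum_distrib_left)

lemma expectation_pair_count_sq:
  assumes n: "n \<ge> 1" and D: "\<And>d. d \<in> D \<Longrightarrow> d > 0"
  shows "measure_pmf.expectation (unif_tuples n N) (\<lambda>T. pair_count N D T * pair_count N D T)
     \<le> (real (card (pairs N)) * (\<Sum>d\<in>D. freq n (\<lambda>t. d dvd t) ^ 2)) ^ 2
       + real (card (pairs N)) * (\<Sum>d\<in>D. \<Sum>d'\<in>D. real (gcd d d') ^ 2 / (real d * real d') ^ 2)
       + (\<Sum>p\<in>pairs N. \<Sum>p'\<in>pairs N. of_bool (adjacent p p'))
         * (\<Sum>d\<in>D. \<Sum>d'\<in>D. real (gcd d d') / (real d * real d') ^ 2)"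
proof -
  let ?P = "\<lambda>p d p' d'. measure_pmf.prob (unif_tuples n N) {T. divides_both d p T \<and> divides_both d' p' T}"
  let ?f = "\<lambda>d. freq n (\<lambda>t. d dvd t) ^ 2"
  let ?B = "\<lambda>d d'. real (gcd d d') ^ 2 / (real d * real d') ^ 2"
  let ?C = "\<lambda>d d'. real (gcd d d') / (real d * real d') ^ 2"
  have "measure_pmf.expectation (unif_tuples n N) (\<lambda>T. pair_count N D T * pair_count N D T)
      = (\<Sum>p\<in>pairs N. \<Sum>p'\<in>pairs N. \<Sum>d\<in>D. \<Sum>d'\<in>D. ?P p d p' d')"
    unfolding pair_count_def sum_product prob_eq_expectation of_bool_conj
    by (simp add: Bochner_Integration.integral_sum integrable_unif_tuples[OF n])
  also have "\<dots> \<le> (\<Sum>p\<in>pairs N. \<Sum>p'\<in>pairs N. \<Sum>d\<in>D. \<Sum>d'\<in>D.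
      1 * (?f d * ?f d') + of_bool (p = p') * ?B d d' + of_bool (adjacent p p') * ?C d d')"
    by (intro sum_mono) (use prob_joint_bound[OF n] D in simp)
  also have "\<dots> = (\<Sum>p\<in>pairs N. \<Sum>p'\<in>pairs N. 1) * (\<Sum>d\<in>D. \<Sum>d'\<in>D. ?f d * ?f d')
      + (\<Sum>p\<in>pairs N. \<Sum>p'\<in>pairs N. of_bool (p = p')) * (\<Sum>d\<in>D. \<Sum>d'\<in>D. ?B d d')
      + (\<Sum>p\<in>pairs N. \<Sum>p'\<in>pairs N. of_bool (adjacent p p')) * (\<Sum>d\<in>D. \<Sum>d'\<in>D. ?C d d')"
    by (simp only: sum.distrib sum_sum_separate)
  also have "(\<Sum>p\<in>pairs N. \<Sum>p'\<in>pairs N. 1) * (\<Sum>d\<in>D. \<Sum>d'\<in>D. ?f d * ?f d')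
      = (real (card (pairs N)) * (\<Sum>d\<in>D. ?f d)) ^ 2"
    by (simp add: power2_eq_square sum_product[symmetric])
  also have "(\<Sum>p\<in>pairs N. \<Sum>p'\<in>pairs N. of_bool (p = p') :: real) = real (card (pairs N))"
    by (simp add: finite_pairs)
  finally show ?thesis .
qed


lemma card_pairs: "2 * card (pairs N) = N * (N - 1)"
proof (induction N)
  case 0
  then show ?case
    by (simp add: pairs_def)
next
  case (Suc N)
  have split: "pairs (Suc N) = pairs N \<union> (\<lambda>j. (j, N)) ` {..<N}"
    by (auto simp: pairs_def)
  have "card (pairs (Suc N)) = card (pairs N) + card ((\<lambda>j. (j, N)) ` {..<N})"
    unfolding split by (rule card_Un_disjoint) (use finite_pairs[of N] in \<open>auto simp: pairs_def\<close>)
  also have "card ((\<lambda>j. (j, N)) ` {..<N}) = N"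
    by (subst card_image) (auto simp: inj_on_def)
  finally show ?case
    using Suc.IH by (cases N) (auto simp: algebra_simps)
qed

lemma card_pairs_le: "real (card (pairs N)) \<le> real N ^ 2"
proof -
  have "card (pairs N) \<le> card ({..<N} \<times> {..<N})"
    by (rule card_mono) (auto simp: pairs_def)
  then show ?thesis
    by (simp add: power2_eq_square flip: of_nat_mult)
qed

lemma card_pairs_ge:
  assumes "N \<ge> 2"
  shows "real (card (pairs N)) \<ge> real N ^ 2 / 4"
proof -
  have "2 * real (card (pairs N)) = real N * (real N - 1)"
    using arg_cong[OF card_pairs[of N], of real] assms by (simp add: of_nat_diff)
  moreover have "real N * (real N / 2) \<le> real N * (real N - 1)"
    using assms by (intro mult_left_mono) auto
  ultimately show ?thesis
    by (simp add: power2_eq_square)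
qed

lemma card_pairs_through: "card (pairs N \<inter> {p'. x \<in> ends p'}) \<le> 2 * N"
proof -
  have "pairs N \<inter> {p'. x \<in> ends p'} \<subseteq> {x} \<times> {..<N} \<union> {..<N} \<times> {x}"
    by (auto simp: pairs_def ends_def)
  then have "card (pairs N \<inter> {p'. x \<in> ends p'}) \<le> card ({x} \<times> {..<N} \<union> {..<N} \<times> {x})"
    by (rule card_mono[rotated]) auto
  also have "\<dots> \<le> card ({x} \<times> {..<N}) + card ({..<N} \<times> {x})"
    by (rule card_Un_le)
  finally show ?thesis
    by simp
qed

lemma count_adjacent: "(\<Sum>p\<in>pairs N. \<Sum>p'\<in>pairs N. of_bool (adjacent p p') :: real) \<le> 4 * real N ^ 3"
proof -
  have "(\<Sum>p'\<in>pairs N. of_bool (adjacent p p') :: real) \<le> 4 * real N" for p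
  proof -
    have "(\<Sum>p'\<in>pairs N. of_bool (adjacent p p') :: real)
        \<le> (\<Sum>p'\<in>pairs N. of_bool (fst p \<in> ends p') + of_bool (snd p \<in> ends p'))"
      by (rule sum_mono) (auto simp: adjacent_def ends_def)
    also have "\<dots> = real (card (pairs N \<inter> {p'. fst p \<in> ends p'}))
        + real (card (pairs N \<inter> {p'. snd p \<in> ends p'}))"
      by (simp add: sum.distrib finite_pairs)
    also have "\<dots> \<le> 4 * real N"
      using card_pairs_through[of N "fst p"] card_pairs_through[of N "snd p"] by linarith
    finally show ?thesis .
  qed
  then have "(\<Sum>p\<in>pairs N. \<Sum>p'\<in>pairs N. of_bool (adjacent p p') :: real) \<le> real (card (pairs N)) * (4 * real N)"
    using sum_mono[of "pairs N" "\<lambda>p. \<Sum>p'\<in>pairs N. of_bool (adjacent p p') :: real" "\<lambda>_. 4 * real N"] by simp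
  also have "\<dots> \<le> real N ^ 2 * (4 * real N)"
    by (intro mult_right_mono card_pairs_le) auto
  finally show ?thesis
    by (simp add: power2_eq_square power3_eq_cube)
qed


text \<open>A crude harmonic-sum bound, enough for the adjacent-pairs term:
  \<open>1/(m+1) \<le> 2 (\<surd>(m+1) - \<surd>m)\<close>.\<close>
lemma harmonic_le_sqrt: "(\<Sum>g\<in>{1..m}. 1 / real g) \<le> 2 * sqrt (real m)"
proof (induction m)
  case (Suc m)
  let ?t = "sqrt (real (Suc m))" and ?s = "sqrt (real m)"
  have st: "?s \<le> ?t" "1 \<le> ?t"
    by simp_all
  have "(?t - ?s) * (?t + ?s) = 1"
    by (simp add: algebra_simps)
  moreover have "(?t - ?s) * (?t + ?s) \<le> (?t - ?s) * (2 * ?t)"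
    using st by (intro mult_left_mono) auto
  ultimately have "1 / ?t \<le> 2 * (?t - ?s)"
    using st by (simp add: field_simps)
  moreover have "?t \<le> ?t * ?t"
    using st by (intro mult_le_cancel_left1[THEN iffD2]) auto
  then have "1 / real (Suc m) \<le> 1 / ?t"
    using st by (intro divide_left_mono) auto
  ultimately show ?case
    using Suc.IH by simp
qed simp

text \<open>Telescoping: \<open>1/g\<^sup>2 \<le> 1/(g-1) - 1/g\<close>.\<close>
lemma inverse_square_tail:
  assumes "m \<ge> 1"
  shows "(\<Sum>g\<in>{m..K}. 1 / real g ^ 2) \<le> 2 / real m"
proof (cases "m \<le> K")
  case True
  then have "(\<Sum>g\<in>{m..K}. 1 / real g ^ 2) \<le> 2 / real m - 1 / real K"
  proof (induction K rule: dec_induct)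
    case base
    show ?case
      using assms by (simp add: field_simps power2_eq_square)
  next
    case (step K)
    have K: "real K \<ge> 1"
      using step assms by simp
    then have "1 / real (Suc K) ^ 2 \<le> 1 / (real K * real (Suc K))"
      by (intro divide_left_mono) (auto simp: power2_eq_square)
    also have "\<dots> = 1 / real K - 1 / real (Suc K)"
      using K by (simp add: field_simps)
    finally have "1 / real (Suc K) ^ 2 \<le> 1 / real K - 1 / real (Suc K)" .
    then show ?case
      using step by simp
  qed
  moreover have "1 / real K \<ge> 0"
    by simp
  ultimately show ?thesis
    by linarith
qed (use assms in simp)

lemma card_multiples_dyadic:
  assumes "g \<ge> 1"
  shows "(\<Sum>d\<in>{a<..2*a}. of_bool (g dvd d) :: real) \<le> real (2 * a) / real g"
proof -
  have "card ({a<..2*a} \<inter> {d. g dvd d}) \<le> card {t\<in>{1..2*a}. g dvd t}"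
    by (intro card_mono) auto
  also have "\<dots> = 2 * a div g"
    using assms by (intro card_multiples) auto
  finally have "real (card ({a<..2*a} \<inter> {d. g dvd d})) * real g \<le> real (2 * a div g * g)"
    using assms by (simp flip: of_nat_mult)
  also have "\<dots> \<le> real (2 * a)"
    by (simp only: of_nat_le_iff div_times_less_eq_dividend)
  finally show ?thesis
    using assms by (simp add: field_simps)
qed

text \<open>Each \<open>g\<close> is the gcd of at most \<open>(2a/g)\<^sup>2\<close> pairs from the dyadic block \<open>(a, 2a]\<close>.\<close>
lemma sum_over_gcd_dyadic_block:
  fixes w :: "nat \<Rightarrow> real"
  assumes w: "\<And>g. w g \<ge> 0"
  shows "(\<Sum>d\<in>{a<..2*a}. \<Sum>d'\<in>{a<..2*a}. w (gcd d d'))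
     \<le> (\<Sum>g\<in>{1..2*a}. w g * (real (2 * a) / real g) ^ 2)"
proof -
  let ?D = "{a<..2*a}" and ?G = "{1..2*a}"
  let ?F = "\<lambda>d g. of_bool (g dvd d) :: real"
  have "(\<Sum>d\<in>?D. \<Sum>d'\<in>?D. w (gcd d d')) \<le> (\<Sum>d\<in>?D. \<Sum>d'\<in>?D. \<Sum>g\<in>?G. ?F d g * ?F d' g * w g)"
  proof (intro sum_mono)
    fix d d' assume d: "d \<in> ?D" "d' \<in> ?D"
    have "gcd d d' \<in> ?G"
      using d by (auto intro: order.trans[OF gcd_le1_nat] simp: Suc_le_eq)
    then have "?F d (gcd d d') * ?F d' (gcd d d') * w (gcd d d') \<le> (\<Sum>g\<in>?G. ?F d g * ?F d' g * w g)"
      by (intro member_le_sum) (auto simp: w)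
    then show "w (gcd d d') \<le> (\<Sum>g\<in>?G. ?F d g * ?F d' g * w g)"
      by simp
  qed
  also have "\<dots> = (\<Sum>g\<in>?G. \<Sum>d\<in>?D. \<Sum>d'\<in>?D. ?F d g * ?F d' g * w g)"
    by (subst sum.swap) (simp only: sum.swap[of _ _ ?G])
  also have "\<dots> = (\<Sum>g\<in>?G. w g * ((\<Sum>d\<in>?D. ?F d g) * (\<Sum>d'\<in>?D. ?F d' g)))"
    by (simp only: sum_distrib_left sum_distrib_right mult_ac)
  also have "\<dots> \<le> (\<Sum>g\<in>?G. w g * (real (2 * a) / real g) ^ 2)"
    unfolding power2_eq_square
    by (intro sum_mono mult_left_mono mult_mono card_multiples_dyadic sum_nonneg w) auto
  finally show ?thesis .
qed

text \<open>Since \<open>d, d' > a\<close> on the block, a weighted gcd sum is at most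
  \<open>4/a\<^sup>2 \<cdot> \<Sum>\<^sub>g\<^sub>\<le>\<^sub>2\<^sub>a w(g)/g\<^sup>2\<close>.\<close>
lemma weighted_gcd_sum_dyadic_block:
  fixes w :: "nat \<Rightarrow> real"
  assumes a: "a \<ge> 1" and w: "\<And>g. w g \<ge> 0"
  shows "(\<Sum>d\<in>{a<..2*a}. \<Sum>d'\<in>{a<..2*a}. w (gcd d d') / (real d * real d') ^ 2)
     \<le> 4 / real a ^ 2 * (\<Sum>g\<in>{1..2*a}. w g / real g ^ 2)"
proof -
  have A: "real a > 0"
    using a by simp
  have "(\<Sum>d\<in>{a<..2*a}. \<Sum>d'\<in>{a<..2*a}. w (gcd d d') / (real d * real d') ^ 2)
      \<le> (\<Sum>d\<in>{a<..2*a}. \<Sum>d'\<in>{a<..2*a}. w (gcd d d') / (real a * real a) ^ 2)"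
    using A by (intro sum_mono divide_left_mono power_mono mult_mono w) auto
  also have "\<dots> = (\<Sum>d\<in>{a<..2*a}. \<Sum>d'\<in>{a<..2*a}. w (gcd d d')) / (real a * real a) ^ 2"
    by (simp add: sum_divide_distrib)
  also have "\<dots> \<le> (\<Sum>g\<in>{1..2*a}. w g * (real (2 * a) / real g) ^ 2) / (real a * real a) ^ 2"
    by (intro divide_right_mono sum_over_gcd_dyadic_block w) simp
  also have "\<dots> = 4 / real a ^ 2 * (\<Sum>g\<in>{1..2*a}. w g / real g ^ 2)"
    using A by (simp add: sum_divide_distrib sum_distrib_left field_simps power2_eq_square)
  finally show ?thesis .
qed

lemma gcd_sq_sum_dyadic_block:
  assumes "a \<ge> 1"
  shows "(\<Sum>d\<in>{a<..2*a}. \<Sum>d'\<in>{a<..2*a}. real (gcd d d') ^ 2 / (real d * real d') ^ 2) \<le> 8 / real a"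
proof -
  have "(\<Sum>g\<in>{1..2*a}. real g ^ 2 / real g ^ 2) = real (2 * a)"
    by (simp add: sum.cong[of _ _ _ "\<lambda>_. 1"])
  then show ?thesis
    using weighted_gcd_sum_dyadic_block[OF assms, of "\<lambda>g. real g ^ 2"] assms
    by (simp add: power2_eq_square)
qed

lemma gcd_sum_dyadic_block:
  assumes "a \<ge> 1"
  shows "(\<Sum>d\<in>{a<..2*a}. \<Sum>d'\<in>{a<..2*a}. real (gcd d d') / (real d * real d') ^ 2)
     \<le> 8 * sqrt (2 * real a) / real a ^ 2"
proof -
  have "(\<Sum>g\<in>{1..2*a}. real g / real g ^ 2) = (\<Sum>g\<in>{1..2*a}. 1 / real g)"
    by (intro sum.cong) (auto simp: power2_eq_square)
  also have "\<dots> \<le> 2 * sqrt (2 * real a)"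
    using harmonic_le_sqrt[of "2 * a"] by simp
  finally have "4 / real a ^ 2 * (\<Sum>g\<in>{1..2*a}. real g / real g ^ 2) \<le> 4 / real a ^ 2 * (2 * sqrt (2 * real a))"
    by (intro mult_left_mono) auto
  then show ?thesis
    using weighted_gcd_sum_dyadic_block[OF assms, of real] by simp
qed

lemma freq_sum_dyadic_block:
  assumes "a \<ge> 1" "4 * a \<le> n"
  shows "(\<Sum>d\<in>{a<..2*a}. freq n (\<lambda>t. d dvd t) ^ 2) \<ge> 1 / (16 * real a)"
proof -
  have A: "real a > 0"
    using assms by simp
  have "(\<Sum>d\<in>{a<..2*a}. (1 / (4 * real a)) ^ 2) \<le> (\<Sum>d\<in>{a<..2*a}. freq n (\<lambda>t. d dvd t) ^ 2)"
  proof (rule sum_mono)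
    fix d assume d: "d \<in> {a<..2*a}"
    then have "1 / (4 * real a) \<le> 1 / (2 * real d)"
      using A by (intro divide_left_mono) auto
    also have "\<dots> \<le> freq n (\<lambda>t. d dvd t)"
      using d assms by (intro freq_dvd_ge) auto
    finally show "(1 / (4 * real a)) ^ 2 \<le> freq n (\<lambda>t. d dvd t) ^ 2"
      using A by (intro power_mono) auto
  qed
  also have "(\<Sum>d\<in>{a<..2*a}. (1 / (4 * real a)) ^ 2) = 1 / (16 * real a)"
    using A by (simp add: power2_eq_square field_simps)
  finally show ?thesis .
qed


lemma max_gcd_eq: "max_gcd N T = Max ((\<lambda>p. gcd (T (fst p)) (T (snd p))) ` pairs N)"
  unfolding max_gcd_def pairs_def by (rule arg_cong[of _ _ Max]) force

lemma max_gcd_ge: "p \<in> pairs N \<Longrightarrow> gcd (T (fst p)) (T (snd p)) \<le> max_gcd N T"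
  unfolding max_gcd_eq by (rule Max_ge) (auto simp: finite_pairs)

lemma max_gcd_attained:
  assumes "N \<ge> 2"
  obtains p where "p \<in> pairs N" "max_gcd N T = gcd (T (fst p)) (T (snd p))"
proof -
  have "(0, 1) \<in> pairs N"
    using assms by (auto simp: pairs_def)
  then have "max_gcd N T \<in> (\<lambda>p. gcd (T (fst p)) (T (snd p))) ` pairs N"
    unfolding max_gcd_eq by (intro Max_in) (auto simp: finite_pairs)
  then show ?thesis
    using that by blast
qed

lemma pair_count_nonzero_imp:
  assumes "n \<ge> 1" "T \<in> set_pmf (unif_tuples n N)" "pair_count N D T \<noteq> 0"
  obtains d where "d \<in> D" "d \<le> max_gcd N T"
proof -
  obtain p d where pd: "p \<in> pairs N" "d \<in> D" "divides_both d p T"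
    using assms(3) unfolding pair_count_def by (auto elim!: sum.not_neutral_contains_not_neutral)
  have "T (fst p) \<in> {1..n}"
    using pd(1) by (intro unif_tuples_range[OF assms(1,2)]) (auto simp: pairs_def)
  then have "d \<le> gcd (T (fst p)) (T (snd p))"
    using pd(3) by (intro dvd_imp_le) (auto simp: divides_both_def ends_def)
  also have "\<dots> \<le> max_gcd N T"
    using pd(1) by (rule max_gcd_ge)
  finally show ?thesis
    using that pd(2) by blast
qed

lemma expectation_pair_count_dyadic_ge:
  assumes N: "N \<ge> 2" and a: "a \<ge> 1" and n: "4 * a \<le> n"
  shows "measure_pmf.expectation (unif_tuples n N) (pair_count N {a<..2*a}) \<ge> real N ^ 2 / (64 * real a)"
proof -
  have "real N ^ 2 / (64 * real a) = real N ^ 2 / 4 * (1 / (16 * real a))"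
    by simp
  also have "\<dots> \<le> real (card (pairs N)) * (\<Sum>d\<in>{a<..2*a}. freq n (\<lambda>t. d dvd t) ^ 2)"
    by (intro mult_mono card_pairs_ge freq_sum_dyadic_block N a n) auto
  also have "\<dots> = measure_pmf.expectation (unif_tuples n N) (pair_count N {a<..2*a})"
    using a n by (intro expectation_pair_count[symmetric]) simp
  finally show ?thesis .
qed

text \<open>Only equal and adjacent pairs contribute to the variance; the gcd-sum estimates bound their
  contributions by \<open>8N\<^sup>2/a\<close> and \<open>32N\<^sup>3\<surd>(2a)/a\<^sup>2\<close>.\<close>
lemma variance_pair_count_dyadic:
  fixes N :: nat
  assumes n: "n \<ge> 1" and a: "a \<ge> 1"
  defines "X \<equiv> pair_count N {a<..2*a}"
  shows "measure_pmf.expectation (unif_tuples n N) (\<lambda>T. X T * X T)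
      - (measure_pmf.expectation (unif_tuples n N) X) ^ 2
    \<le> real N ^ 2 * (8 / real a) + 4 * real N ^ 3 * (8 * sqrt (2 * real a) / real a ^ 2)"
proof -
  let ?D = "{a<..2*a}"
  have "measure_pmf.expectation (unif_tuples n N) (\<lambda>T. X T * X T)
      - (measure_pmf.expectation (unif_tuples n N) X) ^ 2
    \<le> real (card (pairs N)) * (\<Sum>d\<in>?D. \<Sum>d'\<in>?D. real (gcd d d') ^ 2 / (real d * real d') ^ 2)
      + (\<Sum>p\<in>pairs N. \<Sum>p'\<in>pairs N. of_bool (adjacent p p'))
        * (\<Sum>d\<in>?D. \<Sum>d'\<in>?D. real (gcd d d') / (real d * real d') ^ 2)"
    using expectation_pair_count_sq[OF n, of ?D N] unfolding X_def expectation_pair_count[OF n]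
    by simp
  also have "\<dots> \<le> real N ^ 2 * (8 / real a) + 4 * real N ^ 3 * (8 * sqrt (2 * real a) / real a ^ 2)"
  proof (rule add_mono)
    show "real (card (pairs N)) * (\<Sum>d\<in>?D. \<Sum>d'\<in>?D. real (gcd d d') ^ 2 / (real d * real d') ^ 2)
        \<le> real N ^ 2 * (8 / real a)"
      by (rule mult_mono[OF card_pairs_le gcd_sq_sum_dyadic_block[OF a]]) (auto intro!: sum_nonneg)
    show "(\<Sum>p\<in>pairs N. \<Sum>p'\<in>pairs N. of_bool (adjacent p p'))
        * (\<Sum>d\<in>?D. \<Sum>d'\<in>?D. real (gcd d d') / (real d * real d') ^ 2)
        \<le> 4 * real N ^ 3 * (8 * sqrt (2 * real a) / real a ^ 2)"
      by (rule mult_mono[OF count_adjacent gcd_sum_dyadic_block[OF a]]) (auto intro!: sum_nonneg)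
  qed
  finally show ?thesis .
qed

text \<open>Normalising the second-moment bound by the square of the lower bound on the mean.\<close>
lemma lower_tail_algebra:
  fixes x y u :: real
  assumes "x > 0" "y > 0"
  shows "(x ^ 2 * (8 / y) + 4 * x ^ 3 * (8 * u / y ^ 2)) / (x ^ 2 / (64 * y)) ^ 2
     = 4096 * (8 * y / x ^ 2 + 32 * u / x)"
  using assms by (simp add: field_simps power2_eq_square power3_eq_cube)

text \<open>Lower tail: if the maximal gcd is at most \<open>a\<close>, the count for \<open>(a, 2a]\<close> vanishes, which the
  second-moment method makes unlikely.\<close>
lemma prob_max_gcd_le:
  assumes N: "N \<ge> 2" and a: "a \<ge> 1" and n: "4 * a \<le> n"
  shows "measure_pmf.prob (unif_tuples n N) {T. max_gcd N T \<le> a}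
     \<le> 4096 * (8 * real a / real N ^ 2 + 32 * sqrt (2 * real a) / real N)"
proof -
  let ?M = "unif_tuples n N" and ?X = "pair_count N {a<..2*a}"
  let ?B = "real N ^ 2 * (8 / real a) + 4 * real N ^ 3 * (8 * sqrt (2 * real a) / real a ^ 2)"
  let ?P0 = "measure_pmf.prob ?M {T. ?X T = 0}"
  define L where "L = real N ^ 2 / (64 * real a)"
  have n1: "n \<ge> 1"
    using a n by simp
  have L_pos: "L > 0"
    using N a by (simp add: L_def)
  have L_le: "L \<le> measure_pmf.expectation ?M ?X"
    unfolding L_def by (rule expectation_pair_count_dyadic_ge[OF N a n])
  have "measure_pmf.prob ?M {T. max_gcd N T \<le> a} \<le> ?P0"
  proof (rule prob_mono_on_support)
    fix T assume T: "T \<in> set_pmf ?M" "max_gcd N T \<le> a"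
    show "?X T = 0"
    proof (rule ccontr)
      assume "?X T \<noteq> 0"
      then obtain d where "d \<in> {a<..2*a}" "d \<le> max_gcd N T"
        using pair_count_nonzero_imp[OF n1 T(1)] by blast
      then show False
        using T(2) by simp
    qed
  qed
  also have "?P0 \<le> ?B / L ^ 2"
  proof -
    have "?P0 * L ^ 2 \<le> ?P0 * (measure_pmf.expectation ?M ?X) ^ 2"
      using L_pos L_le by (intro mult_left_mono power_mono) auto
    also have "\<dots> \<le> ?B"
      using second_moment_method[of ?M ?X, OF integrable_unif_tuples[OF n1] integrable_unif_tuples[OF n1]]
        variance_pair_count_dyadic[OF n1 a, where N = N] by linarith
    finally show ?thesis
      using L_pos by (simp add: pos_le_divide_eq)
  qed
  also have "\<dots> = 4096 * (8 * real a / real N ^ 2 + 32 * sqrt (2 * real a) / real N)"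
    unfolding L_def using N a by (intro lower_tail_algebra) auto
  finally show ?thesis .
qed

text \<open>Upper tail: a maximal gcd \<open>g \<ge> m\<close> is itself a modulus in \<open>[m, n]\<close> dividing a pair, so
  Markov's inequality applies to the count for \<open>[m, n]\<close>.\<close>
lemma prob_max_gcd_ge:
  assumes N: "N \<ge> 2" and n: "n \<ge> 1" and m: "m \<ge> 1"
  shows "measure_pmf.prob (unif_tuples n N) {T. max_gcd N T \<ge> m} \<le> 2 * real N ^ 2 / real m"
proof -
  let ?M = "unif_tuples n N" and ?D = "{m..n}"
  have "measure_pmf.prob ?M {T. max_gcd N T \<ge> m} \<le> measure_pmf.expectation ?M (pair_count N ?D)"
  proof (rule prob_le_expectation)
    fix T assume T: "T \<in> set_pmf ?M" and ge: "max_gcd N T \<ge> m"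
    obtain p where p: "p \<in> pairs N" "max_gcd N T = gcd (T (fst p)) (T (snd p))"
      using max_gcd_attained[OF N] .
    let ?g = "gcd (T (fst p)) (T (snd p))"
    have "T (fst p) \<in> {1..n}"
      using p(1) by (intro unif_tuples_range[OF n T]) (auto simp: pairs_def)
    then have "?g \<le> T (fst p)" "T (fst p) \<le> n"
      by (auto intro: gcd_le1_nat)
    then have "?g \<le> n"
      by (rule order_trans)
    then have "?g \<in> ?D"
      using ge p(2) by simp
    moreover have "divides_both ?g p T"
      by (simp add: divides_both_def ends_def)
    ultimately show "pair_count N ?D T \<ge> 1"
      using p(1) by (intro pair_count_ge_1) auto
  qed (auto simp: integrable_unif_tuples[OF n] pair_count_nonneg)
  also have "\<dots> = real (card (pairs N)) * (\<Sum>d\<in>?D. freq n (\<lambda>t. d dvd t) ^ 2)"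
    by (rule expectation_pair_count[OF n])
  also have "\<dots> \<le> real N ^ 2 * (2 / real m)"
  proof (intro mult_mono card_pairs_le sum_nonneg)
    have "(\<Sum>d\<in>?D. freq n (\<lambda>t. d dvd t) ^ 2) \<le> (\<Sum>d\<in>?D. (1 / real d) ^ 2)"
      using m by (intro sum_mono power_mono freq_dvd_le freq_nonneg) auto
    also have "\<dots> \<le> 2 / real m"
      using inverse_square_tail[OF m, of n] by (simp add: power_one_over)
    finally show "(\<Sum>d\<in>?D. freq n (\<lambda>t. d dvd t) ^ 2) \<le> 2 / real m" .
  qed auto
  also have "\<dots> = 2 * real N ^ 2 / real m"
    by simp
  finally show ?thesis .
qed

lemma prob_max_gcd_between:
  assumes N: "N \<ge> 2" and a: "a \<ge> 1" and n: "4 * a \<le> n" and m: "m \<ge> 1"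
  shows "measure_pmf.prob (unif_tuples n N) {T. a < max_gcd N T \<and> max_gcd N T < m}
     \<ge> 1 - 4096 * (8 * real a / real N ^ 2 + 32 * sqrt (2 * real a) / real N) - 2 * real N ^ 2 / real m"
proof -
  let ?M = "unif_tuples n N"
  have "{T. max_gcd N T \<le> a} \<union> {T. max_gcd N T \<ge> m} = UNIV - {T. a < max_gcd N T \<and> max_gcd N T < m}"
    by auto
  then have "1 - measure_pmf.prob ?M {T. a < max_gcd N T \<and> max_gcd N T < m}
      = measure_pmf.prob ?M ({T. max_gcd N T \<le> a} \<union> {T. max_gcd N T \<ge> m})"
    using measure_pmf.prob_compl[of "{T. a < max_gcd N T \<and> max_gcd N T < m}" ?M] by simp
  also have "\<dots> \<le> measure_pmf.prob ?M {T. max_gcd N T \<le> a} + measure_pmf.prob ?M {T. max_gcd N T \<ge> m}"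
    by (rule measure_Un_le) auto
  moreover have "n \<ge> 1"
    using a n by simp
  ultimately show ?thesis
    using prob_max_gcd_le[OF N a n] prob_max_gcd_ge[OF N _ m] by fastforce
qed

text \<open>The thresholds will be \<open>a = \<lceil>N\<^sup>2\<^sup>-\<^sup>\<eta>\<rceil>\<close> and \<open>m = \<lceil>N\<^sup>2\<^sup>+\<^sup>\<eta>\<rceil>\<close>; an integer strictly between them
  lies strictly between \<open>N\<^sup>2\<^sup>-\<^sup>\<eta>\<close> and \<open>N\<^sup>2\<^sup>+\<^sup>\<eta>\<close>.\<close>
lemma between_ceilings:
  assumes "nat \<lceil>x\<rceil> < k" "k < nat \<lceil>y\<rceil>"
  shows "x < real k \<and> real k < y"
proof
  show "x < real k"
    using real_nat_ceiling_ge[of x] assms(1) by linarith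
  show "real k < y"
    using nat_ceiling_le_eq[of y k] assms(2) by linarith
qed

lemma real_nat_ceiling_less: "x \<ge> 0 \<Longrightarrow> real (nat \<lceil>x\<rceil>) < x + 1"
  by linarith

lemma ceiling_powr_bounds:
  fixes \<eta> :: real
  assumes N: "N \<ge> 1"
  shows "real (nat \<lceil>real N powr (2 - \<eta>)\<rceil>) / real N ^ 2 \<le> real N powr (- \<eta>) + 1 / real N ^ 2"
    and "real N ^ 2 / real (nat \<lceil>real N powr (2 + \<eta>)\<rceil>) \<le> real N powr (- \<eta>)"
proof -
  have N2: "real N ^ 2 > 0"
    using N by simp
  have split: "real N powr (2 + h) = real N powr h * real N ^ 2" for h
    using N by (simp add: powr_add powr_numeral)
  have "real (nat \<lceil>real N powr (2 - \<eta>)\<rceil>) \<le> real N powr (- \<eta>) * real N ^ 2 + 1"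
    using split[of "- \<eta>"] real_nat_ceiling_less[of "real N powr (2 - \<eta>)"] by simp
  then show "real (nat \<lceil>real N powr (2 - \<eta>)\<rceil>) / real N ^ 2 \<le> real N powr (- \<eta>) + 1 / real N ^ 2"
    using N2 by (simp add: divide_le_eq algebra_simps)
  have pos: "real N powr \<eta> * real N ^ 2 > 0"
    using N by simp
  have "real N powr \<eta> * real N ^ 2 \<le> real (nat \<lceil>real N powr (2 + \<eta>)\<rceil>)"
    using split[of \<eta>] real_nat_ceiling_ge by (metis add.commute)
  then have "real N ^ 2 / real (nat \<lceil>real N powr (2 + \<eta>)\<rceil>) \<le> real N ^ 2 / (real N powr \<eta> * real N ^ 2)"
    using pos N2 by (intro divide_left_mono) auto
  also have "\<dots> = real N powr (- \<eta>)"
    using N2 by (simp add: powr_minus divide_inverse)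
  finally show "real N ^ 2 / real (nat \<lceil>real N powr (2 + \<eta>)\<rceil>) \<le> real N powr (- \<eta>)" .
qed

lemma eventually_exp_dominates_square:
  assumes "\<alpha> > 0"
  shows "eventually (\<lambda>N::nat. 9 * real N ^ 2 < exp (\<alpha> * real N)) sequentially"
proof -
  have "(\<lambda>N::nat. (\<alpha> * real N) ^ 2 / exp (\<alpha> * real N)) \<longlonglongrightarrow> 0"
    by (rule filterlim_compose[OF tendsto_power_div_exp_0])
       (rule filterlim_tendsto_pos_mult_at_top[OF tendsto_const assms filterlim_real_sequentially])
  then have "eventually (\<lambda>N::nat. (\<alpha> * real N) ^ 2 / exp (\<alpha> * real N) < \<alpha> ^ 2 / 9) sequentially"
    by (rule order_tendstoD(2)) (use assms in simp)
  then show ?thesis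
  proof eventually_elim
    case (elim N)
    then have "\<alpha> ^ 2 * (9 * real N ^ 2) < \<alpha> ^ 2 * exp (\<alpha> * real N)"
      by (simp add: divide_less_eq power_mult_distrib algebra_simps)
    then show ?case
      using assms by simp
  qed
qed

text \<open>For large \<open>N\<close> the sample range \<open>{1..\<lfloor>e\<^sup>\<alpha>\<^sup>N\<rfloor>}\<close> is at least four times \<open>a\<close>,
  as the lower-tail estimate requires.\<close>
lemma eventually_block_fits:
  assumes "\<alpha> > 0" "\<eta> > 0"
  shows "eventually (\<lambda>N. 4 * nat \<lceil>real N powr (2 - \<eta>)\<rceil> \<le> nat \<lfloor>exp (\<alpha> * real N)\<rfloor>) sequentially"
  using eventually_exp_dominates_square[OF assms(1)] eventually_ge_at_top[of 1]
proof eventually_elim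
  case (elim N)
  have "real N powr (2 - \<eta>) \<le> real N powr 2"
    using assms elim(2) by (intro powr_mono) auto
  also have "\<dots> = real N ^ 2"
    using elim(2) by (simp add: powr_numeral)
  finally have "real N powr (2 - \<eta>) \<le> real N ^ 2" .
  then have "real (4 * nat \<lceil>real N powr (2 - \<eta>)\<rceil>) \<le> 4 * real N ^ 2 + 4"
    using real_nat_ceiling_less[of "real N powr (2 - \<eta>)"] by simp
  also have "\<dots> \<le> exp (\<alpha> * real N) - 1"
  proof -
    have "1 \<le> real N ^ 2"
      using elim(2) by simp
    then show ?thesis
      using elim(1) by linarith
  qed
  finally show ?case
    by (intro le_nat_floor) simp
qed

text \<open>The combined error of both tail bounds at the chosen thresholds.\<close>
definition window_error :: "real \<Rightarrow> nat \<Rightarrow> real" where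
  "window_error \<eta> N =
     4096 * (8 * real (nat \<lceil>real N powr (2 - \<eta>)\<rceil>) / real N ^ 2
       + 32 * sqrt (2 * real (nat \<lceil>real N powr (2 - \<eta>)\<rceil>)) / real N)
     + 2 * real N ^ 2 / real (nat \<lceil>real N powr (2 + \<eta>)\<rceil>)"

text \<open>Both parts of the error are bounded by \<open>N\<^sup>-\<^sup>\<eta> + N\<^sup>-\<^sup>2\<close> (the first one inside a square
  root), so the error vanishes.\<close>
lemma window_error_tendsto_0:
  fixes \<eta> :: real
  assumes "\<eta> > 0"
  shows "window_error \<eta> \<longlonglongrightarrow> 0"
proof -
  define u where "u N = real (nat \<lceil>real N powr (2 - \<eta>)\<rceil>) / real N ^ 2" for N :: nat
  define v where "v N = real N ^ 2 / real (nat \<lceil>real N powr (2 + \<eta>)\<rceil>)" for N :: nat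
  have p0: "(\<lambda>N. real N powr (- \<eta>)) \<longlonglongrightarrow> 0"
    by (rule tendsto_neg_powr) (use assms filterlim_real_sequentially in auto)
  have "(\<lambda>N. inverse (real N) * inverse (real N)) \<longlonglongrightarrow> 0 * 0"
    by (intro tendsto_mult lim_inverse_n)
  then have q0: "(\<lambda>N. 1 / real N ^ 2) \<longlonglongrightarrow> 0"
    by (simp add: power2_eq_square inverse_eq_divide)
  have "u \<longlonglongrightarrow> 0"
  proof (rule tendsto_sandwich[OF _ _ tendsto_const])
    show "eventually (\<lambda>N. 0 \<le> u N) sequentially"
      unfolding u_def by (intro always_eventually allI divide_nonneg_nonneg of_nat_0_le_iff zero_le_power2)
    show "eventually (\<lambda>N. u N \<le> real N powr (- \<eta>) + 1 / real N ^ 2) sequentially"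
      using eventually_ge_at_top[of 1] unfolding u_def by eventually_elim (rule ceiling_powr_bounds)
    show "(\<lambda>N. real N powr (- \<eta>) + 1 / real N ^ 2) \<longlonglongrightarrow> 0"
      using tendsto_add[OF p0 q0] by simp
  qed
  moreover have "v \<longlonglongrightarrow> 0"
  proof (rule tendsto_sandwich[OF _ _ tendsto_const p0])
    show "eventually (\<lambda>N. 0 \<le> v N) sequentially"
      unfolding v_def by (intro always_eventually allI divide_nonneg_nonneg of_nat_0_le_iff zero_le_power2)
    show "eventually (\<lambda>N. v N \<le> real N powr (- \<eta>)) sequentially"
      using eventually_ge_at_top[of 1] unfolding v_def by eventually_elim (rule ceiling_powr_bounds)
  qed
  ultimately have "(\<lambda>N. 4096 * (8 * u N + 32 * sqrt (2 * u N)) + 2 * v N)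
      \<longlonglongrightarrow> 4096 * (8 * 0 + 32 * sqrt (2 * 0)) + 2 * 0"
    by (intro tendsto_intros)
  moreover have "sqrt (2 * u N) = sqrt (2 * real (nat \<lceil>real N powr (2 - \<eta>)\<rceil>)) / real N" for N
    by (simp add: u_def real_sqrt_divide)
  ultimately show ?thesis
    by (simp add: window_error_def[abs_def] u_def v_def)
qed

lemma eventually_window_prob_ge:
  fixes \<alpha> \<eta> :: real
  assumes "\<alpha> > 0" and "\<eta> > 0"
  shows "eventually (\<lambda>N. 1 - window_error \<eta> N \<le> measure_pmf.prob (T_law \<alpha> N)
            {T. real N powr (2 - \<eta>) < real (max_gcd N T) \<and> real (max_gcd N T) < real N powr (2 + \<eta>)})
           sequentially"
  using eventually_block_fits[OF assms] eventually_ge_at_top[of 2]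
proof eventually_elim
  case (elim N)
  define a where "a = nat \<lceil>real N powr (2 - \<eta>)\<rceil>"
  define m where "m = nat \<lceil>real N powr (2 + \<eta>)\<rceil>"
  let ?n = "nat \<lfloor>exp (\<alpha> * real N)\<rfloor>"
  have "0 < real N powr (2 - \<eta>)" "0 < real N powr (2 + \<eta>)"
    using elim(2) by simp_all
  then have "a \<ge> 1" "m \<ge> 1"
    unfolding a_def m_def by linarith+
  then have "1 - window_error \<eta> N
      \<le> measure_pmf.prob (unif_tuples ?n N) {T. a < max_gcd N T \<and> max_gcd N T < m}"
    using prob_max_gcd_between[OF elim(2), of a ?n m] elim(1) by (simp add: window_error_def a_def m_def)
  also have "\<dots> \<le> measure_pmf.prob (T_law \<alpha> N)
      {T. real N powr (2 - \<eta>) < real (max_gcd N T) \<and> real (max_gcd N T) < real N powr (2 + \<eta>)}"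
    unfolding T_law_eq_unif_tuples a_def m_def
    by (rule prob_mono_on_support) (use between_ceilings in blast)
  finally show ?case .
qed

theorem theorem1p1:
  fixes \<alpha> \<eta> :: real
  assumes "\<alpha> > 0" and "\<eta> > 0"
  shows "(\<lambda>N::nat. measure_pmf.prob (T_law \<alpha> N)
            {T. real N powr (2 - \<eta>) < real (max_gcd N T) \<and>
                real (max_gcd N T) < real N powr (2 + \<eta>)})
         \<longlonglongrightarrow> 1"
proof (rule tendsto_sandwich[OF eventually_window_prob_ge[OF assms] _ _ tendsto_const])
  show "eventually (\<lambda>N. measure_pmf.prob (T_law \<alpha> N)
      {T. real N powr (2 - \<eta>) < real (max_gcd N T) \<and> real (max_gcd N T) < real N powr (2 + \<eta>)} \<le> 1)
      sequentially"
    by (simp add: measure_pmf.prob_le_1)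
  show "(\<lambda>N. 1 - window_error \<eta> N) \<longlonglongrightarrow> 1"
    using tendsto_diff[OF tendsto_const window_error_tendsto_0[OF assms(2)], of 1] by simp
qed

end
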